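(* Under the GoRank setting described in the context, for every node $k\in[n]$ and every iteration $t\ge 1$, $$\mathbb{E}[R'_k(t)] = \frac{1}{t}\sum_{s=0}^{t-1} \mathbf{h}_k^\top \mathbf{W}_1^{\,s}\, \mathbf{e}_k, \qquad \mathbb{E}[R_k(t)] = n\,\mathbb{E}[R'_k(t)]+1,$$ where $\mathbf{h}_k=(\mathbb{I}_{\{X_k>X_1\}},\dots,\mathbb{I}_{\{X_k>X_n\}})^\top$, $\mathbf{W}_1=\mathbf{I}_n-\frac{1}{|E|}\mathbf{L}$, and $\mathbf{e}_k$ is the $k$-th canonical basis vector of $\mathbb{R}^n$.
   Context: Let $n\ge 2$ and let $\mathcal G=(V,E)$ be a connected, non-bipartite, undirected graph with vertex set $V=[n]=\{1,\dots,n\}$; $\mathbf{A}$ is its adjacency matrix, $\mathbf{D}$ the diagonal degree matrix and $\mathbf{L}=\mathbf{D}-\mathbf{A}$ its Laplacian. Node $k$ holds a real observation $X_k$, and the $X_k$ are pairwise distinct. Algorithm GoRank: initialize $Y_k(0)=X_k$ and $R'_k(0)=0$ for all $k$. At each iteration $s=1,2,\dots$: (i) every node $k$ sets $R'_k(s)=(1-1/s)R'_k(s-1)+(1/s)\,\mathbb{I}_{\{X_k>Y_k(s-1)\}}$ and $R_k(s)=nR'_k(s)+1$; (ii) an edge $(i,j)\in E$ is drawn uniformly at random from $E$, independently of everything before; (iii) the auxiliary values are swapped: $Y_i(s)=Y_j(s-1)$, $Y_j(s)=Y_i(s-1)$, and $Y_l(s)=Y_l(s-1)$ for $l\notin\{i,j\}$.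 Expectations are over the random edge sampling. *)

theory Defs
  imports "Jordan_Normal_Form.Matrix"
begin

definition simple_graph :: "nat \<Rightarrow> nat set set \<Rightarrow> bool" where
  "simple_graph n E \<longleftrightarrow> (\<forall>e\<in>E. \<exists>i j. i \<noteq> j \<and> e = {i, j} \<and> i \<in> {1..n} \<and> j \<in> {1..n})"

definition adj_rel :: "nat set set \<Rightarrow> (nat \<times> nat) set" where
  "adj_rel E = {(i, j). {i, j} \<in> E}"

definition connected_graph :: "nat \<Rightarrow> nat set set \<Rightarrow> bool" where
  "connected_graph n E \<longleftrightarrow> (\<forall>i\<in>{1..n}. \<forall>j\<in>{1..n}. (i, j) \<in> (adj_rel E)\<^sup>*)"

definition bipartite_graph :: "nat \<Rightarrow> nat set set \<Rightarrow> bool" where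
  "bipartite_graph n E \<longleftrightarrow> (\<exists>S \<subseteq> {1..n}. \<forall>e\<in>E. \<exists>i\<in>e. \<exists>j\<in>e. i \<in> S \<and> j \<notin> S)"

text \<open>Matrices: row/column index i (0-based) corresponds to vertex i+1.\<close>

definition adj_mat :: "nat \<Rightarrow> nat set set \<Rightarrow> real mat" where
  "adj_mat n E = mat n n (\<lambda>(i, j). if {i+1, j+1} \<in> E then 1 else 0)"

definition deg_mat :: "nat \<Rightarrow> nat set set \<Rightarrow> real mat" where
  "deg_mat n E = mat n n (\<lambda>(i, j). if i = j then real (card {e\<in>E. i+1 \<in> e}) else 0)"

definition lap_mat :: "nat \<Rightarrow> nat set set \<Rightarrow> real mat" where
  "lap_mat n E = deg_mat n E - adj_mat n E"

definition W1 :: "nat \<Rightarrow> nat set set \<Rightarrow> real mat" where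
  "W1 n E = 1\<^sub>m n - (1 / real (card E)) \<cdot>\<^sub>m lap_mat n E"

definition h_vec :: "nat \<Rightarrow> (nat \<Rightarrow> real) \<Rightarrow> nat \<Rightarrow> real vec" where
  "h_vec n X k = vec n (\<lambda>i. if X k > X (i+1) then 1 else 0)"

definition e_vec :: "nat \<Rightarrow> nat \<Rightarrow> real vec" where
  "e_vec n k = unit_vec n (k - 1)"

text \<open>GoRank dynamics. A run is determined by the list es of sampled edges;
  es ! (s-1) is the edge drawn at iteration s.\<close>

definition swap_edge :: "nat set \<Rightarrow> (nat \<Rightarrow> real) \<Rightarrow> (nat \<Rightarrow> real)" where
  "swap_edge e Y = (\<lambda>l. if l \<in> e then Y (THE m. m \<in> e \<and> m \<noteq> l) else Y l)"

primrec Yaux :: "(nat \<Rightarrow> real) \<Rightarrow> nat set list \<Rightarrow> nat \<Rightarrow> (nat \<Rightarrow> real)" where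
  "Yaux X es 0 = X"
| "Yaux X es (Suc s) = swap_edge (es ! s) (Yaux X es s)"

primrec Rp :: "(nat \<Rightarrow> real) \<Rightarrow> nat set list \<Rightarrow> nat \<Rightarrow> nat \<Rightarrow> real" where
  "Rp X es k 0 = 0"
| "Rp X es k (Suc s) = (1 - 1 / real (Suc s)) * Rp X es k s
     + (1 / real (Suc s)) * (if X k > Yaux X es s k then 1 else 0)"

definition Rk :: "nat \<Rightarrow> (nat \<Rightarrow> real) \<Rightarrow> nat set list \<Rightarrow> nat \<Rightarrow> nat \<Rightarrow> real" where
  "Rk n X es k s = real n * Rp X es k s + 1"

text \<open>Expectation over t i.i.d. uniform draws from E: uniform average over all
  length-t edge sequences.\<close>

definition edge_seqs :: "nat set set \<Rightarrow> nat \<Rightarrow> nat set list set" where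
  "edge_seqs E t = {es. set es \<subseteq> E \<and> length es = t}"

definition expect :: "nat set set \<Rightarrow> nat \<Rightarrow> (nat set list \<Rightarrow> real) \<Rightarrow> real" where
  "expect E t f = (\<Sum>es\<in>edge_seqs E t. f es) / real (card (edge_seqs E t))"

end

theory Submission
  imports Defs
begin

text \<open>Each swap only permutes the auxiliary values, so after \<open>s\<close> iterations \<open>Y\<^sub>k(s) = X\<^bsub>\<sigma>(k)\<^esub>\<close>,
  where \<open>\<sigma>\<close> composes the transpositions of the sampled edges.  One uniformly drawn edge moves
  node \<open>k\<close> to node \<open>i\<close> with probability \<open>(W\<^sub>1)\<^sub>i\<^sub>k\<close>, so \<open>\<sigma>(k)\<close> after \<open>s\<close> independent draws is distributed
  as the column \<open>W\<^sub>1\<^sup>s e\<^sub>k\<close>, and \<open>\<bbbP>[X\<^sub>k > Y\<^sub>k(s)] = h\<^sub>k\<^sup>T W\<^sub>1\<^sup>s e\<^sub>k\<close>.  Since \<open>R'\<^sub>k(t)\<close> is the running average of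
  these indicators, the formula follows by linearity.\<close>

definition edge_transp :: "nat set \<Rightarrow> nat \<Rightarrow> nat" where
  "edge_transp e l = (if l \<in> e then (THE m. m \<in> e \<and> m \<noteq> l) else l)"

lemma swap_edge_eq_comp: "swap_edge e Y = Y \<circ> edge_transp e"
  by (auto simp: swap_edge_def edge_transp_def fun_eq_iff)

lemma edge_transp_left: "i \<noteq> j \<Longrightarrow> edge_transp {i, j} i = j"
  unfolding edge_transp_def by (auto intro!: the_equality)

lemma edge_transp_right: "i \<noteq> j \<Longrightarrow> edge_transp {i, j} j = i"
  unfolding edge_transp_def by (auto intro!: the_equality)

lemma edge_transp_notin: "l \<notin> e \<Longrightarrow> edge_transp e l = l"
  unfolding edge_transp_def by simp

text \<open>\<open>origin es s k\<close> is the node whose observation sits at node \<open>k\<close> after the first \<open>s\<close> swaps.\<close>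

primrec origin :: "nat set list \<Rightarrow> nat \<Rightarrow> nat \<Rightarrow> nat" where
  "origin es 0 k = k"
| "origin es (Suc s) k = origin es s (edge_transp (es ! s) k)"

lemma Yaux_eq_comp_origin: "Yaux X es s = X \<circ> origin es s"
  by (induction s) (auto simp: swap_edge_eq_comp)

lemma origin_take: "s \<le> m \<Longrightarrow> origin (take m es) s = origin es s"
proof (induction s)
  case (Suc s)
  then have "take m es ! s = es ! s" if "s < length es"
    using that by simp
  moreover have "take m es = es" if "\<not> s < length es"
    using that Suc.prems by simp
  ultimately show ?case
    using Suc by (auto simp: fun_eq_iff)
qed (simp add: fun_eq_iff)

lemma origin_snoc:
  "origin (es @ [e]) (Suc (length es)) k = origin es (length es) (edge_transp e k)"
  using origin_take[of "length es" "length es" "es @ [e]"] by simp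

lemma simple_graph_edgeE:
  assumes "simple_graph n E" "e \<in> E"
  obtains i j where "i \<noteq> j" "e = {i, j}" "i \<in> {1..n}" "j \<in> {1..n}"
  using assms unfolding simple_graph_def by blast

lemma simple_graph_finite: "simple_graph n E \<Longrightarrow> finite E"
  unfolding simple_graph_def
  by (rule finite_subset[of _ "Pow {1..n}"]) auto

lemma edge_transp_in_vertices:
  assumes "simple_graph n E" "e \<in> E" "k \<in> {1..n}"
  shows "edge_transp e k \<in> {1..n}"
proof -
  obtain i j where "i \<noteq> j" "e = {i, j}" "i \<in> {1..n}" "j \<in> {1..n}"
    using simple_graph_edgeE[OF assms(1,2)] .
  then show ?thesis
    using assms(3) by (cases "k = i"; cases "k = j") (auto simp: edge_transp_left edge_transp_right edge_transp_notin)
qed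

lemma simple_graph_loop_free: "simple_graph n E \<Longrightarrow> {k} \<notin> E"
  by (metis doubleton_eq_iff insert_absorb2 simple_graph_edgeE)

lemma edge_transp_eq_iff:
  assumes "simple_graph n E" "e \<in> E"
  shows "edge_transp e k = i \<longleftrightarrow> (if i = k then k \<notin> e else e = {i, k})"
proof -
  obtain a b where "a \<noteq> b" "e = {a, b}"
    using simple_graph_edgeE[OF assms] by metis
  then show ?thesis
    by (cases "k = a"; cases "k = b") (auto simp: edge_transp_left edge_transp_right edge_transp_notin)
qed

lemma edges_nonempty:
  assumes "n \<ge> 2" "connected_graph n E"
  shows "E \<noteq> {}"
proof
  assume "E = {}"
  then have "adj_rel E = {}"
    by (simp add: adj_rel_def)
  moreover have "(1, 2) \<in> (adj_rel E)\<^sup>*"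
    using assms unfolding connected_graph_def by auto
  ultimately show False
    by simp
qed

lemma W1_carrier: "W1 n E \<in> carrier_mat n n"
  unfolding W1_def lap_mat_def deg_mat_def adj_mat_def by auto

lemma W1_index:
  assumes "i < n" "j < n"
  shows "W1 n E $$ (i, j) = (if i = j then 1 - real (card {e \<in> E. i + 1 \<in> e}) / real (card E) else 0)
      + (if {i + 1, j + 1} \<in> E then 1 / real (card E) else 0)"
  using assms by (simp add: W1_def lap_mat_def deg_mat_def adj_mat_def diff_divide_distrib)

text \<open>\<open>|E| \<cdot> W\<^sub>1\<close> counts the edges whose swap moves node \<open>k\<close> to node \<open>i\<close> (also when \<open>E = {}\<close>, where
  the division in \<open>W\<^sub>1\<close> yields \<open>0\<close>).\<close>

lemma card_edges_moving_eq_W1: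
  assumes "simple_graph n E" "i \<in> {1..n}" "k \<in> {1..n}"
  shows "real (card {e \<in> E. edge_transp e k = i}) = real (card E) * W1 n E $$ (i - 1, k - 1)"
proof (cases "i = k")
  case True
  have "{e \<in> E. edge_transp e k = k} = E - {e \<in> E. k \<in> e}"
    by (auto simp: edge_transp_eq_iff[OF assms(1)])
  moreover have "card {e \<in> E. k \<in> e} \<le> card E"
    using simple_graph_finite[OF assms(1)] by (simp add: card_mono)
  moreover have "k - 1 < n" "k - 1 + 1 = k"
    using assms(3) by auto
  ultimately show ?thesis
    using True simple_graph_finite[OF assms(1)] simple_graph_loop_free[OF assms(1)]
    by (cases "E = {}") (simp_all add: W1_index card_Diff_subset of_nat_diff field_simps)
next
  case False
  have "e \<in> E \<Longrightarrow> edge_transp e k = i \<longleftrightarrow> e = {i, k}" for e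
    using edge_transp_eq_iff[OF assms(1), of e k i] False by simp
  then have "{e \<in> E. edge_transp e k = i} = (if {i, k} \<in> E then {{i, k}} else {})"
    by auto
  moreover have "i - 1 < n" "k - 1 < n" "i - 1 + 1 = i" "k - 1 + 1 = k"
    using assms(2,3) by auto
  ultimately show ?thesis
    using False simple_graph_finite[OF assms(1)]
    by (cases "E = {}") (simp_all add: W1_index insert_commute)
qed

lemma sum_edge_transp:
  assumes "simple_graph n E" "k \<in> {1..n}"
  shows "(\<Sum>e\<in>E. g (edge_transp e k)) = (\<Sum>i\<in>{1..n}. g i * (real (card E) * W1 n E $$ (i - 1, k - 1)))"
proof -
  have "(\<Sum>e\<in>E. g (edge_transp e k)) = (\<Sum>i\<in>{1..n}. \<Sum>e\<in>{e \<in> E. edge_transp e k = i}. g (edge_transp e k))"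
    using simple_graph_finite[OF assms(1)] edge_transp_in_vertices[OF assms(1) _ assms(2)]
    by (intro sum.group[symmetric]) auto
  also have "\<dots> = (\<Sum>i\<in>{1..n}. g i * real (card {e \<in> E. edge_transp e k = i}))"
    by (intro sum.cong refl) simp
  finally show ?thesis
    using card_edges_moving_eq_W1[OF assms(1) _ assms(2)] by simp
qed

lemma index_mult_mat_sum:
  assumes "A \<in> carrier_mat n m" "B \<in> carrier_mat m p" "i < n" "j < p"
  shows "(A * B) $$ (i, j) = (\<Sum>l<m. A $$ (i, l) * B $$ (l, j))"
  using assms by (auto simp: scalar_prod_def lessThan_atLeast0 intro!: sum.cong)

lemma sum_edge_transp_W1_power:
  assumes "simple_graph n E" "j \<in> {1..n}" "k \<in> {1..n}"
  shows "(\<Sum>e\<in>E. (W1 n E ^\<^sub>m s) $$ (j - 1, edge_transp e k - 1))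
       = real (card E) * (W1 n E ^\<^sub>m Suc s) $$ (j - 1, k - 1)"
proof -
  have "(\<Sum>e\<in>E. (W1 n E ^\<^sub>m s) $$ (j - 1, edge_transp e k - 1))
      = (\<Sum>i<n. (W1 n E ^\<^sub>m s) $$ (j - 1, i) * (real (card E) * W1 n E $$ (i, k - 1)))"
    using sum_edge_transp[OF assms(1,3), of "\<lambda>i. (W1 n E ^\<^sub>m s) $$ (j - 1, i - 1)"]
    by (simp add: sum.atLeast1_atMost_eq)
  also have "\<dots> = real (card E) * (W1 n E ^\<^sub>m s * W1 n E) $$ (j - 1, k - 1)"
  proof -
    have "W1 n E ^\<^sub>m s \<in> carrier_mat n n" "j - 1 < n" "k - 1 < n"
      using W1_carrier assms(2,3) by auto
    then show ?thesis
      by (simp add: index_mult_mat_sum[OF _ W1_carrier] sum_distrib_left mult_ac)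
  qed
  finally show ?thesis
    by simp
qed

lemma card_edge_seqs: "finite E \<Longrightarrow> card (edge_seqs E t) = card E ^ t"
  unfolding edge_seqs_def by (rule card_lists_length_eq)

lemma edge_seqs_0: "edge_seqs E 0 = {[]}"
  by (auto simp: edge_seqs_def)

lemma edge_seqs_Suc: "edge_seqs E (Suc t) = (\<lambda>(es, e). es @ [e]) ` (edge_seqs E t \<times> E)"
proof (intro equalityI subsetI)
  fix xs
  assume xs: "xs \<in> edge_seqs E (Suc t)"
  then have "xs \<noteq> []"
    by (auto simp: edge_seqs_def)
  with xs have "xs = butlast xs @ [last xs]" "butlast xs \<in> edge_seqs E t" "last xs \<in> E"
    unfolding edge_seqs_def by (auto dest: in_set_butlastD)
  then show "xs \<in> (\<lambda>(es, e). es @ [e]) ` (edge_seqs E t \<times> E)"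
    by (intro image_eqI[where x = "(butlast xs, last xs)"]) auto
qed (auto simp: edge_seqs_def)

lemma sum_edge_seqs_Suc:
  "(\<Sum>xs\<in>edge_seqs E (Suc t). f xs) = (\<Sum>es\<in>edge_seqs E t. \<Sum>e\<in>E. f (es @ [e]))"
proof -
  have "inj_on (\<lambda>(es, e). es @ [e]) (edge_seqs E t \<times> E)"
    by (auto simp: inj_on_def)
  then show ?thesis
    unfolding edge_seqs_Suc by (simp add: sum.reindex sum.cartesian_product split_def)
qed

lemma sum_edge_seqs_take:
  fixes f :: "nat set list \<Rightarrow> real"
  assumes "s \<le> t"
  shows "(\<Sum>es\<in>edge_seqs E t. f (take s es)) = real (card E) ^ (t - s) * (\<Sum>es\<in>edge_seqs E s. f es)"
  using assms
proof (induction t rule: dec_induct)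
  case base
  then show ?case
    by (auto simp: edge_seqs_def intro!: sum.cong)
next
  case (step m)
  have "(\<Sum>es\<in>edge_seqs E (Suc m). f (take s es)) = (\<Sum>es\<in>edge_seqs E m. \<Sum>e\<in>E. f (take s (es @ [e])))"
    by (rule sum_edge_seqs_Suc)
  also have "\<dots> = (\<Sum>es\<in>edge_seqs E m. real (card E) * f (take s es))"
    using step.hyps by (intro sum.cong refl) (simp add: edge_seqs_def)
  finally show ?case
    using step.hyps step.IH by (simp add: sum_distrib_left[symmetric] Suc_diff_le)
qed

lemma sum_edge_seqs_origin:
  assumes "simple_graph n E" "k \<in> {1..n}"
  shows "(\<Sum>es\<in>edge_seqs E s. g (origin es s k))
       = real (card E) ^ s * (\<Sum>j\<in>{1..n}. g j * (W1 n E ^\<^sub>m s) $$ (j - 1, k - 1))"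
  using assms(2)
proof (induction s arbitrary: k)
  case 0
  have "(\<Sum>j\<in>{1..n}. g j * (1\<^sub>m n :: real mat) $$ (j - 1, k - 1)) = (\<Sum>j\<in>{1..n}. if j = k then g j else 0)"
    using 0 by (intro sum.cong refl) (auto split: if_splits)
  then show ?case
    using 0 W1_carrier[of n E] by (simp add: edge_seqs_0)
next
  case (Suc s)
  have "(\<Sum>es\<in>edge_seqs E (Suc s). g (origin es (Suc s) k))
      = (\<Sum>es\<in>edge_seqs E s. \<Sum>e\<in>E. g (origin (es @ [e]) (Suc s) k))"
    by (rule sum_edge_seqs_Suc)
  also have "\<dots> = (\<Sum>e\<in>E. \<Sum>es\<in>edge_seqs E s. g (origin es s (edge_transp e k)))"
    by (subst sum.swap) (auto simp: edge_seqs_def origin_snoc[of _ _ k, simplified] intro!: sum.cong)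
  also have "\<dots> = real (card E) ^ s * (\<Sum>j\<in>{1..n}. g j * (\<Sum>e\<in>E. (W1 n E ^\<^sub>m s) $$ (j - 1, edge_transp e k - 1)))"
    using Suc edge_transp_in_vertices[OF assms(1)]
    by (simp add: sum_distrib_left sum.swap[of _ E])
  also have "\<dots> = real (card E) ^ Suc s * (\<Sum>j\<in>{1..n}. g j * (W1 n E ^\<^sub>m Suc s) $$ (j - 1, k - 1))"
    using sum_edge_transp_W1_power[OF assms(1) _ Suc.prems]
    by (simp add: sum_distrib_left mult_ac)
  finally show ?case .
qed

lemma h_vec_dot_mult_e_vec:
  assumes "A \<in> carrier_mat n n" "k \<in> {1..n}"
  shows "h_vec n X k \<bullet> (A *\<^sub>v e_vec n k) = (\<Sum>j\<in>{1..n}. (if X k > X j then 1 else 0) * A $$ (j - 1, k - 1))"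
proof -
  have "A *\<^sub>v e_vec n k = col A (k - 1)"
    using assms by (intro eq_vecI) (auto simp: e_vec_def)
  then show ?thesis
    using assms
    by (auto simp: scalar_prod_def h_vec_def sum.atLeast1_atMost_eq lessThan_atLeast0 intro!: sum.cong)
qed

lemma Rp_eq_average: "real t * Rp X es k t = (\<Sum>s<t. if X k > Yaux X es s k then 1 else 0)"
proof (induction t)
  case (Suc t)
  have "real (Suc t) * (1 - 1 / real (Suc t)) = real t"
    by (simp add: field_simps)
  then have "real (Suc t) * Rp X es k (Suc t) = real t * Rp X es k t + (if X k > Yaux X es t k then 1 else 0)"
    by (simp add: distrib_left mult.assoc[symmetric])
  then show ?case
    using Suc by simp
qed simp

lemma sum_edge_seqs_indicator_Yaux:
  assumes "simple_graph n E" "k \<in> {1..n}" "s \<le> t"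
  shows "(\<Sum>es\<in>edge_seqs E t. if X k > Yaux X es s k then 1 else 0)
       = real (card E) ^ t * (h_vec n X k \<bullet> ((W1 n E ^\<^sub>m s) *\<^sub>v e_vec n k))"
proof -
  define g where "g j = (if X k > X j then 1 else 0 :: real)" for j
  have "(\<Sum>es\<in>edge_seqs E t. if X k > Yaux X es s k then 1 else 0)
      = (\<Sum>es\<in>edge_seqs E t. g (origin (take s es) s k))"
    by (simp add: g_def Yaux_eq_comp_origin origin_take)
  also have "\<dots> = real (card E) ^ (t - s) * real (card E) ^ s
      * (\<Sum>j\<in>{1..n}. g j * (W1 n E ^\<^sub>m s) $$ (j - 1, k - 1))"
    using sum_edge_seqs_take[OF assms(3), of "\<lambda>es. g (origin es s k)"]
      sum_edge_seqs_origin[OF assms(1,2)] by simp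
  also have "\<dots> = real (card E) ^ t * (h_vec n X k \<bullet> ((W1 n E ^\<^sub>m s) *\<^sub>v e_vec n k))"
    using assms(2,3) W1_carrier
    by (simp add: h_vec_dot_mult_e_vec g_def power_add[symmetric])
  finally show ?thesis .
qed

theorem mainTheorem1:
  fixes n :: nat and E :: "nat set set" and X :: "nat \<Rightarrow> real"
  assumes "n \<ge> 2"
    and "simple_graph n E"
    and "connected_graph n E"
    and "\<not> bipartite_graph n E"
    and "inj_on X {1..n}"
    and "k \<in> {1..n}"
    and "t \<ge> 1"
  shows "expect E t (\<lambda>es. Rp X es k t)
           = (1 / real t) * (\<Sum>s<t. h_vec n X k \<bullet> ((W1 n E ^\<^sub>m s) *\<^sub>v e_vec n k))
       \<and> expect E t (\<lambda>es. Rk n X es k t) = real n * expect E t (\<lambda>es. Rp X es k t) + 1"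
proof -
  have fin: "finite E"
    using simple_graph_finite[OF assms(2)] .
  have seqs_pos: "real (card E) ^ t > 0"
    using edges_nonempty[OF assms(1,3)] fin by (simp add: card_gt_0_iff)
  have expect_eq: "expect E t f = (\<Sum>es\<in>edge_seqs E t. f es) / real (card E) ^ t" for f
    by (simp add: expect_def card_edge_seqs[OF fin])
  have "Rp X es k t = (1 / real t) * (\<Sum>s<t. if X k > Yaux X es s k then 1 else 0)" for es
    using Rp_eq_average[of t X es k] assms(7) by (simp add: field_simps)
  then have "(\<Sum>es\<in>edge_seqs E t. Rp X es k t)
      = (1 / real t) * (\<Sum>s<t. \<Sum>es\<in>edge_seqs E t. if X k > Yaux X es s k then 1 else 0)"
    by (simp add: sum.swap[of _ "edge_seqs E t"] sum_distrib_left)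
  also have "\<dots> = real (card E) ^ t * ((1 / real t) * (\<Sum>s<t. h_vec n X k \<bullet> ((W1 n E ^\<^sub>m s) *\<^sub>v e_vec n k)))"
    using sum_edge_seqs_indicator_Yaux[OF assms(2,6)] by (simp add: sum_distrib_left)
  finally have "expect E t (\<lambda>es. Rp X es k t)
      = (1 / real t) * (\<Sum>s<t. h_vec n X k \<bullet> ((W1 n E ^\<^sub>m s) *\<^sub>v e_vec n k))"
    using seqs_pos by (simp add: expect_eq)
  moreover have "expect E t (\<lambda>es. Rk n X es k t) = real n * expect E t (\<lambda>es. Rp X es k t) + 1"
    using seqs_pos card_edge_seqs[OF fin, of t]
    by (simp add: expect_eq Rk_def sum.distrib sum_distrib_left add_divide_distrib)
  ultimately show ?thesis ..
qed

end
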